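(* Let $G$ be a graph with $N\ge 1$ vertices and let $d,n,r$ be positive integers with $d\le n$. Call a sequence $S$ of $k$ vertices of $G$ rare if $|N(S)| \leq (2n)^{-2n}\,t_{K_{r,d}}(G)^{\frac{k}{rd}}N$. Call a sequence $T=(v_1,\ldots,v_r)$ of $r$ vertices of $G$ bad with respect to $k$ if the number of rare sequences of $k$ vertices all of whose entries lie in $N(T)$ is at least $\frac{1}{2n}|N(T)|^k$, and call $T$ good if for every $k$ with $d\le k\le n$ it is not bad with respect to $k$. Then $$\sum_{T \text{ good}} |N(T)|^d \geq \tfrac12 h_{K_{r,d}}(G),$$ where the sum is over all good sequences $T$ of $r$ vertices.
   Context: All graphs are finite and simple. Sequences of vertices may contain repeated vertices. For a sequence $S$ of vertices, the common neighborhood $N(S)$ is the set of vertices adjacent to every vertex of $S$. $h_F(G)$ is the number of homomorphisms from $F$ to $G$ (maps $V(F)\to V(G)$ sending edges to edges), and $t_F(G)=h_F(G)/|V(G)|^{|V(F)|}$. $K_{r,d}$ is the complete bipartite graph with parts of sizes $r$ and $d$. *)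

theory Defs
  imports "HOL-Library.FuncSet" Complex_Main
begin

definition simple_graph :: "'a set \<Rightarrow> ('a \<Rightarrow> 'a \<Rightarrow> bool) \<Rightarrow> bool" where
  "simple_graph V E \<longleftrightarrow> finite V \<and> (\<forall>u v. E u v \<longrightarrow> u \<in> V \<and> v \<in> V)
     \<and> (\<forall>u v. E u v \<longrightarrow> E v u) \<and> (\<forall>u. \<not> E u u)"

definition seqs :: "'a set \<Rightarrow> nat \<Rightarrow> 'a list set" where
  "seqs V k = {xs. length xs = k \<and> set xs \<subseteq> V}"

definition common_nbhd :: "'a set \<Rightarrow> ('a \<Rightarrow> 'a \<Rightarrow> bool) \<Rightarrow> 'a list \<Rightarrow> 'a set" where
  "common_nbhd V E S = {v \<in> V. \<forall>u \<in> set S. E u v}"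

definition hom_count :: "'b set \<Rightarrow> ('b \<Rightarrow> 'b \<Rightarrow> bool) \<Rightarrow> 'a set \<Rightarrow> ('a \<Rightarrow> 'a \<Rightarrow> bool) \<Rightarrow> nat" where
  "hom_count VF EF V E = card {f \<in> VF \<rightarrow>\<^sub>E V. \<forall>x y. EF x y \<longrightarrow> E (f x) (f y)}"

definition hom_density :: "'b set \<Rightarrow> ('b \<Rightarrow> 'b \<Rightarrow> bool) \<Rightarrow> 'a set \<Rightarrow> ('a \<Rightarrow> 'a \<Rightarrow> bool) \<Rightarrow> real" where
  "hom_density VF EF V E = real (hom_count VF EF V E) / real (card V) ^ card VF"

definition Krd_V :: "nat \<Rightarrow> nat \<Rightarrow> (nat + nat) set" where
  "Krd_V r d = Inl ` {0..<r} \<union> Inr ` {0..<d}"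

definition Krd_E :: "nat \<Rightarrow> nat \<Rightarrow> (nat + nat) \<Rightarrow> (nat + nat) \<Rightarrow> bool" where
  "Krd_E r d x y \<longleftrightarrow> (\<exists>i j. i < r \<and> j < d \<and>
      ((x = Inl i \<and> y = Inr j) \<or> (x = Inr j \<and> y = Inl i)))"

definition rare :: "'a set \<Rightarrow> ('a \<Rightarrow> 'a \<Rightarrow> bool) \<Rightarrow> nat \<Rightarrow> nat \<Rightarrow> nat \<Rightarrow> 'a list \<Rightarrow> bool" where
  "rare V E n r d S \<longleftrightarrow>
     real (card (common_nbhd V E S)) \<le>
       (2 * real n) powr (- 2 * real n)
       * hom_density (Krd_V r d) (Krd_E r d) V E powr (real (length S) / real (r * d))
       * real (card V)"

definition bad :: "'a set \<Rightarrow> ('a \<Rightarrow> 'a \<Rightarrow> bool) \<Rightarrow> nat \<Rightarrow> nat \<Rightarrow> nat \<Rightarrow> nat \<Rightarrow> 'a list \<Rightarrow> bool" where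
  "bad V E n r d k T \<longleftrightarrow>
     real (card {S \<in> seqs V k. set S \<subseteq> common_nbhd V E T \<and> rare V E n r d S})
       \<ge> 1 / (2 * real n) * real (card (common_nbhd V E T)) ^ k"

definition good :: "'a set \<Rightarrow> ('a \<Rightarrow> 'a \<Rightarrow> bool) \<Rightarrow> nat \<Rightarrow> nat \<Rightarrow> nat \<Rightarrow> 'a list \<Rightarrow> bool" where
  "good V E n r d T \<longleftrightarrow> (\<forall>k. d \<le> k \<and> k \<le> n \<longrightarrow> \<not> bad V E n r d k T)"

end

theory Submission
  imports Defs
begin

text \<open>
  Write a(T) = |N(T)|, N = |V|, t = t_{K_{r,d}}(G), c = (2n)^{-2n} and h = h_{K_{r,d}}(G) = t N^{r+d}.
  Recording the images of the two sides of K_{r,d} shows h \<le> \<Sum>_T a(T)^d, so it suffices that the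
  sequences T which are not good contribute at most h/2. Since S \<subseteq> N(T) iff T \<subseteq> N(S), double
  counting bounds the number of pairs (T, S) with S rare of length k and S \<subseteq> N(T) by
  N^k (c t^{k/rd} N)^r, and a T that is bad for k owns at least a(T)^k/(2n) of these pairs.
  Splitting at the threshold a(T) = N (t/4n)^{1/d} turns this bound on k-th powers into
  \<Sum> a(T)^d \<le> h/(2n) over the T bad for k, and the at most n values of k lose at most h/2.
\<close>

lemma finite_seqs: "finite A \<Longrightarrow> finite (seqs A k)"
  unfolding seqs_def using finite_lists_length_eq[of A k] by (simp add: conj_commute)

lemma card_seqs: "finite A \<Longrightarrow> card (seqs A k) = card A ^ k"
  unfolding seqs_def using card_lists_length_eq[of A k] by (simp add: conj_commute)

lemma common_nbhd_subset: "common_nbhd V E T \<subseteq> V"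
  by (auto simp: common_nbhd_def)

lemma card_seqs_in_common_nbhd:
  assumes "finite V"
  shows "card {S \<in> seqs V k. set S \<subseteq> common_nbhd V E T} = card (common_nbhd V E T) ^ k"
proof -
  have "{S \<in> seqs V k. set S \<subseteq> common_nbhd V E T} = seqs (common_nbhd V E T) k"
    using common_nbhd_subset[of V E T] by (auto simp: seqs_def)
  then show ?thesis
    using assms card_seqs finite_subset[OF common_nbhd_subset] by metis
qed

lemma hom_count_Krd_le_sum_common_nbhd:
  assumes G: "simple_graph V E"
  shows "hom_count (Krd_V r d) (Krd_E r d) V E \<le> (\<Sum>T\<in>seqs V r. card (common_nbhd V E T) ^ d)"
proof -
  have fin: "finite V" using G by (simp add: simple_graph_def)
  define H where "H = {f \<in> Krd_V r d \<rightarrow>\<^sub>E V. \<forall>x y. Krd_E r d x y \<longrightarrow> E (f x) (f y)}"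
  define Q where "Q = (SIGMA T:seqs V r. {S \<in> seqs V d. set S \<subseteq> common_nbhd V E T})"
  define parts :: "(nat + nat \<Rightarrow> 'a) \<Rightarrow> 'a list \<times> 'a list"
    where "parts f = (map (f \<circ> Inl) [0..<r], map (f \<circ> Inr) [0..<d])" for f
  have "inj_on parts H"
  proof
    fix f g assume "f \<in> H" "g \<in> H" "parts f = parts g"
    then show "f = g"
      unfolding H_def parts_def
      by (intro PiE_ext[where k = "Krd_V r d"]) (auto simp: Krd_V_def map_eq_conv)
  qed
  moreover have "parts ` H \<subseteq> Q"
  proof
    fix p assume "p \<in> parts ` H"
    then obtain f where f: "f \<in> H" and p: "p = parts f" by auto
    then have "f x \<in> V" if "x \<in> Krd_V r d" for x
      using that by (auto simp: H_def)
    moreover have "E (f (Inl i)) (f (Inr j))" if "i < r" "j < d" for i j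
      using f that by (auto simp: H_def Krd_E_def)
    ultimately show "p \<in> Q"
      by (auto simp: p parts_def Q_def seqs_def common_nbhd_def Krd_V_def)
  qed
  moreover have "finite Q"
    using fin by (simp add: Q_def finite_seqs)
  ultimately have "card H \<le> card Q"
    by (metis card_image card_mono)
  also have "card Q = (\<Sum>T\<in>seqs V r. card (common_nbhd V E T) ^ d)"
    using fin by (simp add: Q_def finite_seqs card_seqs_in_common_nbhd)
  finally show ?thesis by (simp add: hom_count_def H_def)
qed

lemma subset_common_nbhd_swap:
  assumes "simple_graph V E" "set S \<subseteq> V" "set T \<subseteq> V"
  shows "set S \<subseteq> common_nbhd V E T \<longleftrightarrow> set T \<subseteq> common_nbhd V E S"
  using assms unfolding simple_graph_def common_nbhd_def by blast

lemma sum_card_common_nbhd_seqs: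
  assumes G: "simple_graph V E"
  shows "(\<Sum>T\<in>seqs V r. card {S \<in> seqs V k. set S \<subseteq> common_nbhd V E T \<and> P S})
       = (\<Sum>S\<in>{S \<in> seqs V k. P S}. card (common_nbhd V E S) ^ r)"
proof -
  have fin: "finite V" using G by (simp add: simple_graph_def)
  have "(SIGMA T:seqs V r. {S \<in> seqs V k. set S \<subseteq> common_nbhd V E T \<and> P S})
      = prod.swap ` (SIGMA S:{S \<in> seqs V k. P S}. {T \<in> seqs V r. set T \<subseteq> common_nbhd V E S})"
    using subset_common_nbhd_swap[OF G] by (auto simp: seqs_def image_iff) blast+
  then have "card (SIGMA T:seqs V r. {S \<in> seqs V k. set S \<subseteq> common_nbhd V E T \<and> P S})
      = card (SIGMA S:{S \<in> seqs V k. P S}. {T \<in> seqs V r. set T \<subseteq> common_nbhd V E S})"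
    by (simp add: card_image)
  then show ?thesis
    using fin by (simp add: finite_seqs card_seqs_in_common_nbhd)
qed

definition rare_count :: "'a set \<Rightarrow> ('a \<Rightarrow> 'a \<Rightarrow> bool) \<Rightarrow> nat \<Rightarrow> nat \<Rightarrow> nat \<Rightarrow> nat \<Rightarrow> 'a list \<Rightarrow> nat" where
  "rare_count V E n r d k T = card {S \<in> seqs V k. set S \<subseteq> common_nbhd V E T \<and> rare V E n r d S}"

lemma sum_rare_count_le:
  assumes G: "simple_graph V E" and "r \<ge> 1"
  shows "(\<Sum>T\<in>seqs V r. real (rare_count V E n r d k T))
    \<le> ((2 * real n) powr (- 2 * real n)) ^ r
       * hom_density (Krd_V r d) (Krd_E r d) V E powr (real k / real d) * real (card V) ^ (k + r)"
proof -
  define c where "c = (2 * real n) powr (- 2 * real n)"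
  define t where "t = hom_density (Krd_V r d) (Krd_E r d) V E"
  define N where "N = real (card V)"
  define Rare where "Rare = {S \<in> seqs V k. rare V E n r d S}"
  have fin: "finite V" using G by (simp add: simple_graph_def)
  have "t \<ge> 0" by (simp add: t_def hom_density_def)
  moreover have "real r * (real k / (real r * real d)) = real k / real d"
    using \<open>r \<ge> 1\<close> by simp
  ultimately have t_powr: "(t powr (real k / (real r * real d))) ^ r = t powr (real k / real d)"
    using \<open>r \<ge> 1\<close> by (cases "t = 0") (simp_all add: powr_power)
  have rare_bound: "real (card (common_nbhd V E S)) ^ r \<le> c ^ r * t powr (real k / real d) * N ^ r"
    if "S \<in> Rare" for S
  proof -
    have "real (card (common_nbhd V E S)) \<le> c * t powr (real k / (real r * real d)) * N"
      using that by (auto simp: Rare_def rare_def seqs_def c_def t_def N_def)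
    then have "real (card (common_nbhd V E S)) ^ r \<le> (c * t powr (real k / (real r * real d)) * N) ^ r"
      by (rule power_mono) simp
    then show ?thesis by (simp add: power_mult_distrib t_powr)
  qed
  have "(\<Sum>T\<in>seqs V r. rare_count V E n r d k T) = (\<Sum>S\<in>Rare. card (common_nbhd V E S) ^ r)"
    unfolding rare_count_def Rare_def by (rule sum_card_common_nbhd_seqs[OF G])
  then have "(\<Sum>T\<in>seqs V r. real (rare_count V E n r d k T))
      = (\<Sum>S\<in>Rare. real (card (common_nbhd V E S)) ^ r)"
    by (simp flip: of_nat_sum of_nat_power)
  also have "\<dots> \<le> (\<Sum>S\<in>Rare. c ^ r * t powr (real k / real d) * N ^ r)"
    by (rule sum_mono) (rule rare_bound)
  also have "\<dots> = real (card Rare) * (c ^ r * t powr (real k / real d) * N ^ r)"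
    by simp
  also have "\<dots> \<le> N ^ k * (c ^ r * t powr (real k / real d) * N ^ r)"
  proof (rule mult_right_mono)
    have "card Rare \<le> card (seqs V k)"
      using fin by (auto simp: Rare_def finite_seqs intro: card_mono)
    then show "real (card Rare) \<le> N ^ k"
      using fin by (simp add: N_def card_seqs flip: of_nat_power)
  qed (simp add: c_def N_def)
  also have "\<dots> = c ^ r * t powr (real k / real d) * N ^ (k + r)"
    by (simp add: power_add)
  finally show ?thesis
    by (simp add: c_def t_def N_def)
qed

lemma sum_bad_power_le_sum_rare_count:
  assumes "finite V" and "n \<ge> 1"
  shows "(\<Sum>T\<in>{T \<in> seqs V r. bad V E n r d k T}. real (card (common_nbhd V E T)) ^ k)
    \<le> 2 * real n * (\<Sum>T\<in>seqs V r. real (rare_count V E n r d k T))"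
proof -
  have "(\<Sum>T\<in>{T \<in> seqs V r. bad V E n r d k T}. real (card (common_nbhd V E T)) ^ k)
      \<le> (\<Sum>T\<in>{T \<in> seqs V r. bad V E n r d k T}. 2 * real n * real (rare_count V E n r d k T))"
    using \<open>n \<ge> 1\<close> by (intro sum_mono) (auto simp: bad_def rare_count_def field_simps)
  also have "\<dots> \<le> (\<Sum>T\<in>seqs V r. 2 * real n * real (rare_count V E n r d k T))"
    using \<open>finite V\<close> by (intro sum_mono2) (auto simp: finite_seqs)
  finally show ?thesis by (simp add: sum_distrib_left)
qed

lemma power_le_threshold:
  fixes a M :: real
  assumes "0 \<le> a" "0 < M" "d \<le> k"
  shows "a ^ d \<le> M ^ d + a ^ k / M ^ (k - d)"
proof (cases "a \<le> M")
  case True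
  then have "a ^ d \<le> M ^ d" using assms by (simp add: power_mono)
  moreover have "0 \<le> a ^ k / M ^ (k - d)" using assms by simp
  ultimately show ?thesis by linarith
next
  case False
  then have "a ^ d * M ^ (k - d) \<le> a ^ d * a ^ (k - d)"
    using assms by (intro mult_left_mono power_mono) auto
  also have "\<dots> = a ^ k" using assms by (simp flip: power_add)
  finally have "a ^ d \<le> a ^ k / M ^ (k - d)" using assms by (simp add: pos_le_divide_eq)
  then show ?thesis using assms by (simp add: add_increasing)
qed

lemma two_mult_power_le_power_double:
  assumes "n \<ge> 2"
  shows "2 * real n * (4 * real n) ^ n \<le> (2 * real n) ^ (2 * n)"
proof -
  have "2 * real n \<le> real n ^ 2" using assms by (simp add: power2_eq_square)
  also have "\<dots> \<le> real n ^ n" using assms by (intro power_increasing) auto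
  finally have "2 * real n * (4 * real n) ^ n \<le> real n ^ n * (4 * real n) ^ n"
    by (rule mult_right_mono) simp
  also have "\<dots> = (2 * real n) ^ (2 * n)"
    by (simp add: power_mult power_mult_distrib power2_eq_square)
  finally show ?thesis .
qed

lemma mult_le_inverse_double:
  assumes "n \<ge> 1" and "c \<le> 1 / (2 * real n) ^ (2 * n)"
  shows "2 * real n * c \<le> 1 / (2 * real n)"
proof -
  have "2 * real n * c \<le> 2 * real n / (2 * real n) ^ (2 * n)"
    using mult_left_mono[OF assms(2), of "2 * real n"] by simp
  also have "\<dots> \<le> 2 * real n / (2 * real n) ^ 2"
    using assms by (intro divide_left_mono power_increasing) auto
  also have "\<dots> = 1 / (2 * real n)"
    by (simp add: power2_eq_square)
  finally show ?thesis .
qed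

lemma mult_powr_le_inverse_quadruple:
  assumes "n \<ge> 2" and "0 \<le> c" "c \<le> 1 / (2 * real n) ^ (2 * n)" and "e \<le> real (n - 1)"
  shows "2 * real n * c * (4 * real n) powr e \<le> 1 / (4 * real n)"
proof -
  have "(4 * real n) powr e \<le> (4 * real n) powr real (n - 1)"
    using assms by (intro powr_mono) auto
  also have "\<dots> = (4 * real n) ^ (n - 1)"
    by (rule powr_realpow) (use assms in simp)
  finally have "2 * real n * c * (4 * real n) powr e
      \<le> 2 * real n * (1 / (2 * real n) ^ (2 * n)) * (4 * real n) ^ (n - 1)"
    using assms by (intro mult_mono mult_left_mono) auto
  also have "\<dots> \<le> 1 / (4 * real n)"
  proof -
    have "2 * real n * (4 * real n) ^ (n - 1) * (4 * real n) = 2 * real n * (4 * real n) ^ n"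
      using assms by (simp add: power_eq_if)
    then show ?thesis
      using two_mult_power_le_power_double[OF assms(1)] assms by (simp add: field_simps)
  qed
  finally show ?thesis .
qed

lemma sum_power_le_of_sum_higher_power_le:
  fixes a :: "'b \<Rightarrow> real" and N t c :: real
  assumes "finite B" and card_B: "real (card B) \<le> N ^ r" and a_nonneg: "\<And>x. x \<in> B \<Longrightarrow> 0 \<le> a x"
    and sum_k: "(\<Sum>x\<in>B. a x ^ k) \<le> 2 * real n * c * t powr (real k / real d) * N ^ (k + r)"
    and c: "0 \<le> c" "c \<le> 1 / (2 * real n) ^ (2 * n)"
    and "0 < t" "0 < N" "1 \<le> d" "d \<le> k" "k \<le> n"
  shows "(\<Sum>x\<in>B. a x ^ d) \<le> t * N ^ (r + d) / (2 * real n)"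
proof (cases "k = d")
  case True
  have "(\<Sum>x\<in>B. a x ^ d) \<le> 2 * real n * c * (t * N ^ (r + d))"
    using sum_k True assms by (simp add: ac_simps)
  also have "\<dots> \<le> 1 / (2 * real n) * (t * N ^ (r + d))"
    using assms by (intro mult_right_mono mult_le_inverse_double) auto
  finally show ?thesis by simp
next
  case False
  with assms have "d < k" "n \<ge> 2" by auto
  define e where "e = real (k - d) / real d"
  define q where "q = t / (4 * real n)"
  \<comment> \<open>chosen so that the terms below the threshold cost at most N^r M^d = t N^{r+d}/(4n)\<close>
  define M where "M = N * q powr (1 / real d)"
  have "q > 0" using assms by (simp add: q_def)
  then have "M > 0" using assms by (simp add: M_def)
  have M_d: "M ^ d = N ^ d * q" and M_kd: "M ^ (k - d) = N ^ (k - d) * q powr e"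
    using \<open>q > 0\<close> assms by (simp_all add: M_def e_def power_mult_distrib powr_power)
  have "e \<le> real (k - d)"
    using assms by (simp add: e_def divide_le_eq mult_le_cancel_left1)
  then have e_le: "e \<le> real (n - 1)"
    using assms by linarith
  have "(\<Sum>x\<in>B. a x ^ d) \<le> (\<Sum>x\<in>B. M ^ d + a x ^ k / M ^ (k - d))"
    using a_nonneg \<open>M > 0\<close> \<open>d < k\<close> by (intro sum_mono power_le_threshold) auto
  also have "\<dots> = real (card B) * M ^ d + (\<Sum>x\<in>B. a x ^ k) / M ^ (k - d)"
    by (simp add: sum.distrib sum_divide_distrib)
  also have "\<dots> \<le> N ^ r * M ^ d + 2 * real n * c * t powr (real k / real d) * N ^ (k + r) / M ^ (k - d)"
    using card_B sum_k \<open>M > 0\<close> by (intro add_mono mult_right_mono divide_right_mono) auto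
  also have "\<dots> = t * N ^ (r + d) / (4 * real n) + 2 * real n * c * (4 * real n) powr e * (t * N ^ (r + d))"
  proof -
    have "real k / real d = 1 + e"
      using assms \<open>d < k\<close> by (simp add: e_def field_simps of_nat_diff)
    then have "t powr (real k / real d) = t * t powr e"
      using \<open>0 < t\<close> by (simp add: powr_add)
    moreover have "N ^ (k + r) = N ^ (k - d) * N ^ (r + d)"
      using \<open>d < k\<close> by (simp flip: power_add)
    ultimately show ?thesis
      using assms by (simp add: M_d M_kd q_def powr_divide power_add field_simps)
  qed
  also have "\<dots> \<le> t * N ^ (r + d) / (4 * real n) + 1 / (4 * real n) * (t * N ^ (r + d))"
    using assms e_le \<open>n \<ge> 2\<close> by (intro add_left_mono mult_right_mono mult_powr_le_inverse_quadruple) auto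
  also have "\<dots> = t * N ^ (r + d) / (2 * real n)" by (simp add: field_simps)
  finally show ?thesis .
qed

lemma sum_UN_le:
  fixes f :: "'a \<Rightarrow> 'b::ordered_ab_group_add"
  assumes "finite I" "\<And>i. i \<in> I \<Longrightarrow> finite (A i)" "\<And>x. 0 \<le> f x"
  shows "sum f (\<Union>i\<in>I. A i) \<le> (\<Sum>i\<in>I. sum f (A i))"
  using assms
proof (induction I rule: finite_induct)
  case (insert i I)
  have "sum f (A i \<union> (\<Union>j\<in>I. A j)) \<le> sum f (A i) + sum f (\<Union>j\<in>I. A j)"
    using insert by (simp add: sum_Un sum_nonneg)
  also have "\<dots> \<le> sum f (A i) + (\<Sum>j\<in>I. sum f (A j))"
    using insert by (simp add: add_left_mono)
  finally show ?case using insert.hyps by simp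
qed simp

lemma card_Krd_V: "card (Krd_V r d) = r + d"
  unfolding Krd_V_def by (subst card_Un_disjoint) (auto simp: card_image)

lemma sum_bad_card_common_nbhd_power_le:
  assumes G: "simple_graph V E" and "card V \<ge> 1" and "r \<ge> 1" and "1 \<le> d" "d \<le> k" "k \<le> n"
    and h_pos: "hom_count (Krd_V r d) (Krd_E r d) V E > 0"
  shows "(\<Sum>T\<in>{T \<in> seqs V r. bad V E n r d k T}. real (card (common_nbhd V E T)) ^ d)
    \<le> real (hom_count (Krd_V r d) (Krd_E r d) V E) / (2 * real n)"
proof -
  define t where "t = hom_density (Krd_V r d) (Krd_E r d) V E"
  define N where "N = real (card V)"
  define c where "c = (2 * real n) powr (- 2 * real n)"
  have fin: "finite V" using G by (simp add: simple_graph_def)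
  have "N \<ge> 1" using \<open>card V \<ge> 1\<close> by (simp add: N_def)
  have h_eq: "real (hom_count (Krd_V r d) (Krd_E r d) V E) = t * N ^ (r + d)"
    using \<open>N \<ge> 1\<close> by (simp add: t_def N_def hom_density_def card_Krd_V)
  then have "t * N ^ (r + d) > 0" using h_pos by simp
  moreover have "N ^ (r + d) > 0" using \<open>N \<ge> 1\<close> by simp
  ultimately have "t > 0" by (rule zero_less_mult_pos2)
  have "c = inverse ((2 * real n) powr real (2 * n))"
    unfolding c_def by (subst powr_minus[symmetric]) simp
  also have "\<dots> = 1 / (2 * real n) ^ (2 * n)"
    using assms by (subst powr_realpow) (simp_all add: divide_inverse)
  finally have c_eq: "c = 1 / (2 * real n) ^ (2 * n)" .
  moreover have "1 \<le> (2 * real n) ^ (2 * n)"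
    using assms by (intro one_le_power) simp
  ultimately have "c ^ r \<le> c ^ 1"
    using assms by (intro power_decreasing) auto
  show ?thesis
    unfolding h_eq
  proof (rule sum_power_le_of_sum_higher_power_le[where c = "c ^ r" and k = k])
    show "real (card {T \<in> seqs V r. bad V E n r d k T}) \<le> N ^ r"
      using fin card_mono[OF finite_seqs[OF fin], of "{T \<in> seqs V r. bad V E n r d k T}" r]
      by (auto simp: N_def card_seqs simp flip: of_nat_power)
    show "(\<Sum>T\<in>{T \<in> seqs V r. bad V E n r d k T}. real (card (common_nbhd V E T)) ^ k)
        \<le> 2 * real n * c ^ r * t powr (real k / real d) * N ^ (k + r)"
    proof -
      have "(\<Sum>T\<in>{T \<in> seqs V r. bad V E n r d k T}. real (card (common_nbhd V E T)) ^ k)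
          \<le> 2 * real n * (\<Sum>T\<in>seqs V r. real (rare_count V E n r d k T))"
        using assms by (intro sum_bad_power_le_sum_rare_count fin) simp
      also have "\<dots> \<le> 2 * real n * (c ^ r * t powr (real k / real d) * N ^ (k + r))"
        using sum_rare_count_le[OF G \<open>r \<ge> 1\<close>]
        by (intro mult_left_mono) (simp_all add: c_def t_def N_def)
      finally show ?thesis by (simp add: mult.assoc)
    qed
    show "c ^ r \<le> 1 / (2 * real n) ^ (2 * n)"
      using \<open>c ^ r \<le> c ^ 1\<close> c_eq by simp
  qed (use assms \<open>t > 0\<close> \<open>N \<ge> 1\<close> fin in \<open>auto simp: c_def finite_seqs\<close>)
qed

lemma sum_not_good_card_common_nbhd_power_le:
  assumes G: "simple_graph V E" and "card V \<ge> 1" and "r \<ge> 1" and "1 \<le> d" "d \<le> n"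
    and h_pos: "hom_count (Krd_V r d) (Krd_E r d) V E > 0"
  shows "(\<Sum>T\<in>{T \<in> seqs V r. \<not> good V E n r d T}. real (card (common_nbhd V E T)) ^ d)
    \<le> real (hom_count (Krd_V r d) (Krd_E r d) V E) / 2"
proof -
  define h where "h = real (hom_count (Krd_V r d) (Krd_E r d) V E)"
  have fin: "finite V" using G by (simp add: simple_graph_def)
  have "{T \<in> seqs V r. \<not> good V E n r d T} = (\<Union>k\<in>{d..n}. {T \<in> seqs V r. bad V E n r d k T})"
    by (auto simp: good_def)
  then have "(\<Sum>T\<in>{T \<in> seqs V r. \<not> good V E n r d T}. real (card (common_nbhd V E T)) ^ d)
      \<le> (\<Sum>k\<in>{d..n}. h / (2 * real n))"
    using sum_bad_card_common_nbhd_power_le[OF assms(1-3)] assms fin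
    by (simp only:) (intro order.trans[OF sum_UN_le sum_mono]; auto simp: h_def finite_seqs)
  also have "\<dots> = real (n + 1 - d) * (h / (2 * real n))" by simp
  also have "\<dots> \<le> real n * (h / (2 * real n))"
    using assms by (intro mult_right_mono) (auto simp: h_def)
  also have "\<dots> = h / 2" using assms by simp
  finally show ?thesis by (simp add: h_def)
qed

theorem lemma2p1:
  fixes V :: "'a set" and E :: "'a \<Rightarrow> 'a \<Rightarrow> bool" and d n r :: nat
  assumes "simple_graph V E" and "card V \<ge> 1"
    and "d \<ge> 1" and "n \<ge> 1" and "r \<ge> 1" and "d \<le> n"
  shows "(\<Sum>T \<in> {T \<in> seqs V r. good V E n r d T}. real (card (common_nbhd V E T)) ^ d)
           \<ge> 1/2 * real (hom_count (Krd_V r d) (Krd_E r d) V E)"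
proof (cases "hom_count (Krd_V r d) (Krd_E r d) V E = 0")
  case True
  then show ?thesis by (simp add: sum_nonneg)
next
  case False
  define a where "a = (\<lambda>T. real (card (common_nbhd V E T)) ^ d)"
  have fin: "finite V" using assms by (simp add: simple_graph_def)
  have "real (hom_count (Krd_V r d) (Krd_E r d) V E) \<le> (\<Sum>T\<in>seqs V r. a T)"
    using of_nat_mono[OF hom_count_Krd_le_sum_common_nbhd[OF assms(1), of r d]]
    by (simp add: a_def)
  also have "\<dots> = (\<Sum>T\<in>{T \<in> seqs V r. good V E n r d T}. a T)
      + (\<Sum>T\<in>{T \<in> seqs V r. \<not> good V E n r d T}. a T)"
    using fin by (subst sum.union_disjoint[symmetric]) (auto simp: finite_seqs intro!: sum.cong)
  finally show ?thesis
    using sum_not_good_card_common_nbhd_power_le[OF assms(1,2,5,3,6)] False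
    unfolding a_def by simp
qed

end
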